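(* If $0\le p\le t=\frac12$, then bold play is optimal, i.e. $\pi(p,\frac12)=p+(1-p)p$, attained by $c_1=c_2=\frac12$, $c_i=0$ for $i\ge3$.
   Context: Let $\beta_1,\beta_2,\ldots$ be independent Bernoulli random variables with success probability $p$. A stake sequence is a sequence $\gamma=(c_1,c_2,\ldots)$ of non-negative reals with $c_1\ge c_2\ge\cdots$ and $\sum_i c_i=1$; write $S_\gamma=\sum_i c_i\beta_i$. For $0\le p\le t\le 1$ define $\pi(p,t)=\sup\{\mathbf P(S_\gamma\ge t)\mid \gamma \text{ a stake sequence}\}$. Bold play for threshold $t$ is the stake sequence with $c_i=\frac1m$ for $i\le m$ and $c_i=0$ for $i>m$, where $m=\lfloor 1/t\rfloor$; it is optimal if it attains $\pi(p,t)$. *)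

theory Defs
  imports "HOL-Probability.Probability"
begin

text \<open>Stake sequences are indexed from 0: c 0 \<ge> c 1 \<ge> ..., with sum 1.\<close>
definition stake_seq :: "(nat \<Rightarrow> real) \<Rightarrow> bool" where
  "stake_seq c \<longleftrightarrow> (\<forall>i. 0 \<le> c i) \<and> (\<forall>i. c (Suc i) \<le> c i) \<and> c sums 1"

definition bern_space :: "real \<Rightarrow> (nat \<Rightarrow> bool) measure" where
  "bern_space p = (\<Pi>\<^sub>M i\<in>(UNIV::nat set). measure_pmf (bernoulli_pmf p))"

definition S_stake :: "(nat \<Rightarrow> real) \<Rightarrow> (nat \<Rightarrow> bool) \<Rightarrow> real" where
  "S_stake c \<omega> = (\<Sum>i. c i * (if \<omega> i then 1 else 0))"

definition win_prob :: "real \<Rightarrow> (nat \<Rightarrow> real) \<Rightarrow> real \<Rightarrow> real" where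
  "win_prob p c t = measure (bern_space p) {\<omega> \<in> space (bern_space p). t \<le> S_stake c \<omega>}"

definition pi_opt :: "real \<Rightarrow> real \<Rightarrow> real" where
  "pi_opt p t = Sup {win_prob p c t | c. stake_seq c}"

definition bold_play :: "real \<Rightarrow> nat \<Rightarrow> real" where
  "bold_play t i = (let m = nat \<lfloor>1 / t\<rfloor> in if i < m then 1 / real m else 0)"

end

theory Submission
  imports Defs
begin

text \<open>Truncate the stake sequence after an index \<open>n\<close> whose tail \<open>t\<close> is smaller than \<open>c\<^sub>0\<close>.
  On \<open>\<beta>\<^sub>0 = 1\<close> we win with probability \<open>p\<close>; on \<open>\<beta>\<^sub>0 = 0\<close> the sets of winning indices among
  \<open>1, \<dots>, n - 1\<close> form an intersecting family, and by the Erdos-Ko-Rado theorem in its \<open>p\<close>-biased form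
  (Katona's circle argument for rational \<open>p\<close>, then continuity) such a family has measure at most \<open>p\<close>
  when \<open>p \<le> 1/2\<close>.\<close>

section \<open>Intersecting families under the biased measure\<close>

definition intersecting :: "'a set set \<Rightarrow> bool" where
  "intersecting F \<longleftrightarrow> (\<forall>A\<in>F. \<forall>B\<in>F. A \<inter> B \<noteq> {})"

definition biased_measure :: "real \<Rightarrow> 'a set \<Rightarrow> 'a set set \<Rightarrow> real" where
  "biased_measure p I F = (\<Sum>A\<in>F. p ^ card A * (1 - p) ^ (card I - card A))"

lemma card_le_if_pairwise_cyclically_close:
  fixes S :: "nat set" and m k :: nat
  assumes S: "S \<subseteq> {0..<m}" and k: "0 < k" "2 * k \<le> m"
    and close: "\<And>s s'. s \<in> S \<Longrightarrow> s' \<in> S \<Longrightarrow> s < s' \<Longrightarrow> s' - s < k \<or> m - k < s' - s"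
  shows "card S \<le> k"
proof (cases "S = {}")
  case False
  have fin: "finite S" using S finite_subset by blast
  define s0 where "s0 = Min S"
  have s0: "s0 \<in> S" "\<And>s. s \<in> S \<Longrightarrow> s0 \<le> s" using fin False by (auto simp: s0_def)
  have far: "m - k < s - s0" if "s \<in> S" "\<not> s - s0 < k" for s
    using close[OF s0(1) that(1)] that k by linarith
  txt \<open>Fold the far points \<open>s0 + (m - k) + j\<close> onto \<open>s0 + j\<close>: they can never both lie in \<open>S\<close>.\<close>
  define g where "g s = (if s - s0 < k then s - s0 else s - s0 - (m - k))" for s
  have "g ` S \<subseteq> {0..<k}"
    using S far k by (auto simp: g_def subset_iff)
  moreover have "inj_on g S"
  proof (rule inj_onI)
    fix a b assume a: "a \<in> S" and b: "b \<in> S" and gab: "g a = g b"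
    have not_folded: False if "x \<in> S" "y \<in> S" "x - s0 < k" "\<not> y - s0 < k" "g x = g y" for x y
    proof -
      have "y - x = m - k" "x < y"
        using that far[of y] s0(2)[of x] s0(2)[of y] k by (auto simp: g_def)
      then show False using close[OF that(1,2)] k by auto
    qed
    consider "a - s0 < k" "b - s0 < k" | "a - s0 < k" "\<not> b - s0 < k"
      | "\<not> a - s0 < k" "b - s0 < k" | "\<not> a - s0 < k" "\<not> b - s0 < k"
      by blast
    then show "a = b"
    proof cases
      case 1
      then show ?thesis using gab s0(2)[OF a] s0(2)[OF b] by (simp add: g_def)
    next
      case 2
      then show ?thesis using not_folded[OF a b _ _ gab] by blast
    next
      case 3
      then show ?thesis using not_folded[OF b a _ _ gab[symmetric]] by blast
    next
      case 4
      then have "a - s0 - (m - k) = b - s0 - (m - k)" using gab by (simp add: g_def)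
      then show ?thesis using far[OF a 4(1)] far[OF b 4(2)] s0(2)[OF a] s0(2)[OF b] by linarith
    qed
  qed
  ultimately show ?thesis
    using card_inj_on_le[of g S "{0..<k}"] by simp
qed simp

lemma card_rotated_initial_segment:
  fixes m s k :: nat
  assumes "s < m" "k \<le> m"
  shows "card {x\<in>{0..<m}. (x + s) mod m < k} = k"
proof -
  define f where "f x = (x + s) mod m" for x
  have "inj_on f {0..<m}"
  proof (rule inj_onI)
    fix x y assume "x \<in> {0..<m}" "y \<in> {0..<m}" "f x = f y"
    moreover have "(z + s) mod m = (if z + s < m then z + s else z + s - m)" if "z < m" for z
      using that assms(1) by (simp add: mod_if le_mod_geq)
    ultimately show "x = y" by (auto simp: f_def split: if_splits)
  qed
  moreover have "f ` {x\<in>{0..<m}. f x < k} = {0..<k}"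
  proof (intro equalityI subsetI)
    fix y assume y: "y \<in> {0..<k}"
    have "f ((y + (m - s)) mod m) = y"
      using y assms by (simp add: f_def mod_add_left_eq)
    then show "y \<in> f ` {x\<in>{0..<m}. f x < k}"
      using y assms by (intro image_eqI[of _ _ "(y + (m - s)) mod m"]) auto
  qed auto
  ultimately have "card {x\<in>{0..<m}. f x < k} = k"
    using card_image[OF inj_on_subset, of f "{0..<m}" "{x\<in>{0..<m}. f x < k}"] by force
  then show ?thesis by (simp add: f_def)
qed

lemma card_PiE_with_preimage:
  assumes "finite I" "A \<subseteq> I" "J \<subseteq> M"
  shows "card {u \<in> I \<rightarrow>\<^sub>E M. {i\<in>I. u i \<in> J} = A}
    = card J ^ card A * card (M - J) ^ (card I - card A)"
proof -
  have "{u \<in> I \<rightarrow>\<^sub>E M. {i\<in>I. u i \<in> J} = A} = Pi\<^sub>E I (\<lambda>i. if i \<in> A then J else M - J)"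
    using assms(2,3) by (auto simp: PiE_iff extensional_def split: if_splits) blast
  then have "card {u \<in> I \<rightarrow>\<^sub>E M. {i\<in>I. u i \<in> J} = A}
      = (\<Prod>i\<in>I. if i \<in> A then card J else card (M - J))"
    using assms(1) by (simp add: card_PiE if_distrib)
  also have "\<dots> = card J ^ card (I \<inter> A) * card (M - J) ^ card (I - A)"
    using assms(1) by (simp add: prod.If_cases Diff_eq)
  also have "I \<inter> A = A" using assms(2) by blast
  finally show ?thesis
    using assms(1,2) by (simp add: card_Diff_subset finite_subset)
qed

text \<open>Katona's circle argument: place the points of \<open>I\<close> on the cycle \<open>\<int>/m\<close> by \<open>u\<close> and count the
  pairs \<open>(u, s)\<close> for which the points landing in the arc \<open>[-s, k - s)\<close> form a member of \<open>F\<close>.\<close>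
lemma intersecting_family_cyclic_count:
  fixes I :: "'a set" and F :: "'a set set" and m k :: nat
  assumes I: "finite I" and F: "F \<subseteq> Pow I" "intersecting F" and k: "0 < k" "2 * k \<le> m"
  shows "m * (\<Sum>A\<in>F. k ^ card A * (m - k) ^ (card I - card A)) \<le> k * m ^ card I"
proof -
  define X where "X = I \<rightarrow>\<^sub>E {0..<m}"
  define arc where "arc s = {x\<in>{0..<m}. (x + s) mod m < k}" for s
  define P where "P u s \<longleftrightarrow> {i\<in>I. u i \<in> arc s} \<in> F" for u s
  define N where "N = (\<Sum>A\<in>F. k ^ card A * (m - k) ^ (card I - card A))"
  have finX: "finite X" using I by (simp add: X_def finite_PiE)
  have finF: "finite F" using F(1) I by (meson finite_Pow_iff finite_subset)
  have per_shift: "card {u\<in>X. P u s} = N" if s: "s < m" for s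
  proof -
    have arc_card: "card (arc s) = k"
      using card_rotated_initial_segment[OF s, of k] k by (simp add: arc_def)
    have arc_sub: "arc s \<subseteq> {0..<m}" by (auto simp: arc_def)
    then have arc_card': "card ({0..<m} - arc s) = m - k"
      using arc_card by (simp add: card_Diff_subset finite_subset)
    have "{u\<in>X. P u s} = (\<Union>A\<in>F. {u\<in>X. {i\<in>I. u i \<in> arc s} = A})"
      by (auto simp: P_def)
    also have "card \<dots> = (\<Sum>A\<in>F. card {u\<in>X. {i\<in>I. u i \<in> arc s} = A})"
      using finF finX by (intro card_UN_disjoint) auto
    also have "\<dots> = N" unfolding N_def X_def
      using F(1) I arc_sub by (intro sum.cong) (auto simp: card_PiE_with_preimage arc_card arc_card')
    finally show ?thesis .
  qed
  have per_placement: "card {s\<in>{0..<m}. P u s} \<le> k" for u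
  proof (rule card_le_if_pairwise_cyclically_close[OF _ k])
    fix s s' assume s: "s \<in> {s\<in>{0..<m}. P u s}" and s': "s' \<in> {s\<in>{0..<m}. P u s}" and "s < s'"
    obtain i where i: "(u i + s) mod m < k" "(u i + s') mod m < k"
    proof -
      have "{i\<in>I. u i \<in> arc s} \<inter> {i\<in>I. u i \<in> arc s'} \<noteq> {}"
        using s s' F(2) by (auto simp: P_def intersecting_def)
      then show thesis using that by (auto simp: arc_def)
    qed
    show "s' - s < k \<or> m - k < s' - s"
    proof (rule ccontr)
      assume "\<not> (s' - s < k \<or> m - k < s' - s)"
      then have "(u i + s) mod m + (s' - s) < m" using i(1) by linarith
      moreover have "(u i + s') mod m = ((u i + s) mod m + (s' - s)) mod m"
        using \<open>s < s'\<close> by (metis add.assoc le_add_diff_inverse less_imp_le mod_add_left_eq)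
      ultimately show False using i(2) \<open>\<not> (s' - s < k \<or> m - k < s' - s)\<close> by simp
    qed
  qed auto
  have count: "card {x\<in>S. Q x} = (\<Sum>x\<in>S. if Q x then 1 else 0)" if "finite S" for S :: "'b set" and Q
    using that by (simp add: sum.inter_filter[symmetric])
  have "m * N = (\<Sum>s\<in>{0..<m}. card {u\<in>X. P u s})" using per_shift by simp
  also have "\<dots> = (\<Sum>s\<in>{0..<m}. \<Sum>u\<in>X. if P u s then 1 else 0)"
    by (simp only: count finX)
  also have "\<dots> = (\<Sum>u\<in>X. \<Sum>s\<in>{0..<m}. if P u s then 1 else 0)"
    by (rule sum.swap)
  also have "\<dots> = (\<Sum>u\<in>X. card {s\<in>{0..<m}. P u s})"
    by (simp only: count finite_atLeastLessThan)
  also have "\<dots> \<le> (\<Sum>u\<in>X. k)" by (intro sum_mono per_placement)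
  also have "\<dots> = k * m ^ card I" using I by (simp add: X_def card_PiE)
  finally show ?thesis unfolding N_def .
qed

lemma biased_measure_intersecting_le_rational:
  fixes k m :: nat
  assumes I: "finite I" and F: "F \<subseteq> Pow I" "intersecting F" and m: "0 < m" "2 * k \<le> m"
  shows "biased_measure (k / m) I F \<le> k / m"
proof (cases "k = 0")
  case True
  have "(0::real) ^ card A = 0" if "A \<in> F" for A
    using that F I by (auto simp: intersecting_def card_gt_0_iff finite_subset)
  then show ?thesis using True by (simp add: biased_measure_def sum.neutral)
next
  case False
  define N where "N = (\<Sum>A\<in>F. k ^ card A * (m - k) ^ (card I - card A))"
  have "m * N \<le> k * m ^ card I"
    unfolding N_def using False by (intro intersecting_family_cyclic_count[OF I F]) (use m in auto)
  then have count: "real m * real N \<le> real k * real m ^ card I"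
    by (metis of_nat_le_iff of_nat_mult of_nat_power)
  have "(k / m) ^ card A * (1 - k / m) ^ (card I - card A)
      = real (k ^ card A * (m - k) ^ (card I - card A)) / real m ^ card I" if "A \<in> F" for A
  proof -
    have "card A \<le> card I" using that F(1) I by (simp add: card_mono subset_iff)
    then have "real m ^ card I = real m ^ card A * real m ^ (card I - card A)"
      by (simp flip: power_add)
    moreover have "1 - real k / real m = real (m - k) / real m" using m by (simp add: field_simps)
    ultimately show ?thesis by (simp add: power_divide)
  qed
  then have "biased_measure (k / m) I F = real N / real m ^ card I"
    by (simp add: biased_measure_def N_def sum_divide_distrib)
  also have "\<dots> \<le> k / m"
    using count m by (simp add: field_simps)
  finally show ?thesis .
qed

lemma biased_measure_intersecting_le:
  assumes I: "finite I" and F: "F \<subseteq> Pow I" "intersecting F" and p: "0 \<le> p" "p \<le> 1/2"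
  shows "biased_measure p I F \<le> p"
proof -
  define k where "k j = nat \<lfloor>p * Suc j\<rfloor>" for j
  define r where "r j = k j / Suc j" for j
  have k_floor: "real (k j) = of_int \<lfloor>p * Suc j\<rfloor>" for j
    using p by (simp add: k_def)
  have r_le: "r j \<le> p" for j
    using k_floor[of j] by (simp add: r_def divide_le_eq)
  have r_ge: "p + - inverse (Suc j) \<le> r j" for j
  proof -
    have "p * Suc j - 1 \<le> k j" using k_floor[of j] by linarith
    then have "(p * Suc j - 1) / Suc j \<le> r j"
      unfolding r_def by (intro divide_right_mono) auto
    then show ?thesis by (simp add: field_simps)
  qed
  have r_lim: "r \<longlonglongrightarrow> p"
    by (rule tendsto_sandwich[OF _ _ LIMSEQ_inverse_real_of_nat_add_minus tendsto_const])
       (use r_le r_ge in auto)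
  have "(\<lambda>j. biased_measure (r j) I F) \<longlonglongrightarrow> biased_measure p I F"
    unfolding biased_measure_def by (intro tendsto_intros r_lim)
  moreover have "biased_measure (r j) I F \<le> r j" for j
  proof -
    have "real (k j) \<le> p * Suc j" using k_floor[of j] by simp
    moreover have "2 * (p * Suc j) \<le> Suc j" using mult_right_mono[of "2 * p" 1 "real (Suc j)"] p by simp
    ultimately have "2 * real (k j) \<le> real (Suc j)" by linarith
    then show ?thesis
      unfolding r_def by (intro biased_measure_intersecting_le_rational[OF I F]) auto
  qed
  ultimately show ?thesis
    using r_lim by (intro LIMSEQ_le) auto
qed

lemma intersecting_heavy_subsets:
  fixes c :: "'a \<Rightarrow> real"
  assumes "finite J" "\<And>i. i \<in> J \<Longrightarrow> 0 \<le> c i" "(\<Sum>i\<in>J. c i) < 2 * a"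
  shows "intersecting {A. A \<subseteq> J \<and> a \<le> (\<Sum>i\<in>A. c i)}"
  unfolding intersecting_def
proof (intro ballI notI)
  fix A B assume A: "A \<in> {A. A \<subseteq> J \<and> a \<le> (\<Sum>i\<in>A. c i)}" and B: "B \<in> {A. A \<subseteq> J \<and> a \<le> (\<Sum>i\<in>A. c i)}"
    and "A \<inter> B = {}"
  then have "2 * a \<le> (\<Sum>i\<in>A \<union> B. c i)"
    using assms(1) by (subst sum.union_disjoint) (auto intro: finite_subset)
  also have "\<dots> \<le> (\<Sum>i\<in>J. c i)"
    using A B assms(1,2) by (intro sum_mono2) auto
  finally show False using assms(3) by simp
qed

lemma biased_measure_insert_unused:
  assumes "finite I" "x \<notin> I" "F \<subseteq> Pow I"
  shows "biased_measure p (insert x I) F = (1 - p) * biased_measure p I F"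
proof -
  have "card (insert x I) - card A = Suc (card I - card A)" if "A \<in> F" for A
    using assms that card_mono[of I A] by auto
  then show ?thesis
    unfolding biased_measure_def sum_distrib_left by (intro sum.cong) auto
qed

section \<open>Cylinder events of the Bernoulli product space\<close>

lemma space_bern_space [simp]: "space (bern_space p) = UNIV"
  by (simp add: bern_space_def space_PiM)

lemma prob_space_bern_space: "prob_space (bern_space p)"
  unfolding bern_space_def by (intro prob_space_PiM prob_space_measure_pmf)

lemma bern_space_pattern_eq_prod_emb:
  assumes "A \<subseteq> I"
  shows "{\<omega>. {i\<in>I. \<omega> i} = A}
    = prod_emb UNIV (\<lambda>_. measure_pmf (bernoulli_pmf p)) I (\<Pi>\<^sub>E i\<in>I. {i \<in> A})"
  using assms by (auto simp: prod_emb_iff PiE_iff)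

lemma bern_space_cylinder_in_sets:
  assumes "finite I" "F \<subseteq> Pow I"
  shows "{\<omega>. {i\<in>I. \<omega> i} \<in> F} \<in> sets (bern_space p)"
proof -
  have "{\<omega>. {i\<in>I. \<omega> i} = A} \<in> sets (bern_space p)" if "A \<in> F" for A
    using that assms unfolding bern_space_def
    by (subst bern_space_pattern_eq_prod_emb) (auto intro!: sets_PiM_I)
  moreover have "{\<omega>. {i\<in>I. \<omega> i} \<in> F} = (\<Union>A\<in>F. {\<omega>. {i\<in>I. \<omega> i} = A})" by auto
  moreover have "finite F" using assms by (meson finite_Pow_iff finite_subset)
  ultimately show ?thesis by auto
qed

lemma measure_bern_space_cylinder:
  assumes p: "0 \<le> p" "p \<le> 1" and I: "finite I" and F: "F \<subseteq> Pow I"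
  shows "measure (bern_space p) {\<omega>. {i\<in>I. \<omega> i} \<in> F} = biased_measure p I F"
proof -
  define M where "M = measure_pmf (bernoulli_pmf p)"
  interpret product_prob_space "\<lambda>_. M" UNIV
    unfolding M_def by unfold_locales
  interpret B: prob_space "bern_space p" by (rule prob_space_bern_space)
  have pattern: "measure (bern_space p) {\<omega>. {i\<in>I. \<omega> i} = A}
      = p ^ card A * (1 - p) ^ (card I - card A)" if "A \<subseteq> I" for A
  proof -
    have "measure (bern_space p) {\<omega>. {i\<in>I. \<omega> i} = A}
        = measure (\<Pi>\<^sub>M i\<in>UNIV. M) (prod_emb UNIV (\<lambda>_. M) I (\<Pi>\<^sub>E i\<in>I. {i \<in> A}))"
      using bern_space_pattern_eq_prod_emb[OF that] by (simp add: bern_space_def M_def)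
    also have "\<dots> = (\<Prod>i\<in>I. measure M {i \<in> A})"
      using I by (intro measure_PiM_emb) (auto simp: M_def)
    also have "\<dots> = (\<Prod>i\<in>I. if i \<in> A then p else 1 - p)"
      using p by (intro prod.cong) (auto simp: M_def measure_pmf_single)
    also have "\<dots> = p ^ card (I \<inter> A) * (1 - p) ^ card (I - A)"
      using I by (simp add: prod.If_cases Diff_eq)
    finally show ?thesis
      using that I by (simp add: Int_absorb1 card_Diff_subset finite_subset)
  qed
  have "finite F" using I F by (meson finite_Pow_iff finite_subset)
  have "{\<omega>. {i\<in>I. \<omega> i} = A} \<in> B.events" if "A \<in> F" for A
    using bern_space_cylinder_in_sets[OF I, of "{A}"] that F by auto
  then have "(\<lambda>A. {\<omega>. {i\<in>I. \<omega> i} = A}) ` F \<subseteq> B.events" by blast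
  moreover have "disjoint_family_on (\<lambda>A. {\<omega>. {i\<in>I. \<omega> i} = A}) F"
    by (auto simp: disjoint_family_on_def)
  ultimately have "measure (bern_space p) (\<Union>A\<in>F. {\<omega>. {i\<in>I. \<omega> i} = A})
      = (\<Sum>A\<in>F. measure (bern_space p) {\<omega>. {i\<in>I. \<omega> i} = A})"
    using B.finite_measure_finite_Union[OF \<open>finite F\<close>] by blast
  moreover have "{\<omega>. {i\<in>I. \<omega> i} \<in> F} = (\<Union>A\<in>F. {\<omega>. {i\<in>I. \<omega> i} = A})" by auto
  ultimately have "measure (bern_space p) {\<omega>. {i\<in>I. \<omega> i} \<in> F}
      = (\<Sum>A\<in>F. measure (bern_space p) {\<omega>. {i\<in>I. \<omega> i} = A})"
    by simp
  also have "\<dots> = biased_measure p I F"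
    using F unfolding biased_measure_def by (intro sum.cong) (auto simp: pattern)
  finally show ?thesis .
qed

lemma bern_space_coordinate:
  assumes "0 \<le> p" "p \<le> 1"
  shows "{\<omega>. \<omega> i} \<in> sets (bern_space p)" and "measure (bern_space p) {\<omega>. \<omega> i} = p"
proof -
  have eq: "{\<omega>. \<omega> i} = {\<omega>. {j\<in>{i}. \<omega> j} \<in> {{i}}}" by auto
  show "{\<omega>. \<omega> i} \<in> sets (bern_space p)"
    unfolding eq by (rule bern_space_cylinder_in_sets) auto
  show "measure (bern_space p) {\<omega>. \<omega> i} = p"
    unfolding eq using assms by (subst measure_bern_space_cylinder) (auto simp: biased_measure_def)
qed

section \<open>Stake sequences and bold play\<close>

lemma stake_seq_tail_lt_first:
  assumes "stake_seq c"
  obtains n where "1 \<le> n" "(\<Sum>i. c (i + n)) < c 0"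
proof -
  have c: "\<And>i. 0 \<le> c i" "decseq c" "c sums 1"
    using assms by (auto simp: stake_seq_def decseq_SucI)
  have "0 < c 0"
  proof (rule ccontr)
    assume "\<not> 0 < c 0"
    moreover have "c i \<le> c 0" for i using c(2) by (simp add: decseqD)
    ultimately have "c = (\<lambda>_. 0)" using c(1) by (intro ext antisym) (auto simp: not_less intro: order_trans)
    then show False using c(3) sums_zero sums_unique2 by fastforce
  qed
  then obtain N where "\<And>n. N \<le> n \<Longrightarrow> norm (\<Sum>i. c (i + n)) < c 0"
    using suminf_exist_split sums_summable[OF c(3)] by blast
  then show ?thesis
    using that[of "max N 1"] by (simp add: abs_less_iff)
qed

lemma S_stake_le_prefix_plus_tail:
  assumes "\<And>i. 0 \<le> c i" "summable c"
  shows "S_stake c \<omega> \<le> (\<Sum>i\<in>{i\<in>{0..<n}. \<omega> i}. c i) + (\<Sum>i. c (i + n))"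
proof -
  define f where "f i = c i * (if \<omega> i then 1 else 0)" for i
  have f: "\<And>i. 0 \<le> f i" "\<And>i. f i \<le> c i" using assms(1) by (auto simp: f_def)
  have "summable f"
    by (rule summable_comparison_test'[where g = c and N = 0]) (use f assms(2) in auto)
  then have "S_stake c \<omega> = (\<Sum>i. f (i + n)) + (\<Sum>i<n. f i)"
    unfolding S_stake_def f_def[symmetric] by (rule suminf_split_initial_segment)
  also have "(\<Sum>i. f (i + n)) \<le> (\<Sum>i. c (i + n))"
    using f \<open>summable f\<close> assms(2) by (intro suminf_le) (auto simp: summable_iff_shift)
  also have "(\<Sum>i<n. f i) = (\<Sum>i\<in>{i\<in>{0..<n}. \<omega> i}. c i)"
    unfolding f_def by (subst sum.inter_filter) (auto simp: lessThan_atLeast0 intro!: sum.cong)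
  finally show ?thesis by simp
qed

lemma stake_seq_truncation:
  assumes c: "stake_seq c"
  obtains n t where "1 \<le> n" "(\<Sum>i\<in>{1..<n}. c i) < 1 - 2 * t"
    "\<And>\<omega>. S_stake c \<omega> \<le> (\<Sum>i\<in>{i\<in>{0..<n}. \<omega> i}. c i) + t"
proof -
  have c_nonneg: "\<And>i. 0 \<le> c i" and c_sums: "c sums 1"
    using c by (auto simp: stake_seq_def)
  obtain n where n: "1 \<le> n" and tail: "(\<Sum>i. c (i + n)) < c 0"
    using stake_seq_tail_lt_first[OF c] by blast
  have "1 = (\<Sum>i. c (i + n)) + (\<Sum>i<n. c i)"
    using suminf_split_initial_segment[OF sums_summable[OF c_sums], of n] c_sums
    by (simp add: sums_iff)
  also have "(\<Sum>i<n. c i) = c 0 + (\<Sum>i\<in>{1..<n}. c i)"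
    using n by (simp add: lessThan_atLeast0 sum.atLeast_Suc_lessThan)
  finally have "(\<Sum>i\<in>{1..<n}. c i) < 1 - 2 * (\<Sum>i. c (i + n))"
    using tail by simp
  with n show ?thesis
    using that S_stake_le_prefix_plus_tail[OF c_nonneg sums_summable[OF c_sums]] by blast
qed

lemma win_prob_half_le:
  assumes c: "stake_seq c" and p: "0 \<le> p" "p \<le> 1/2"
  shows "win_prob p c (1/2) \<le> p + (1 - p) * p"
proof -
  obtain n t where n: "1 \<le> n" and stakes_after_first: "(\<Sum>i\<in>{1..<n}. c i) < 1 - 2 * t"
    and truncated: "\<And>\<omega>. S_stake c \<omega> \<le> (\<Sum>i\<in>{i\<in>{0..<n}. \<omega> i}. c i) + t"
    using stake_seq_truncation[OF c] by blast
  define G where "G = {A. A \<subseteq> {1..<n} \<and> 1/2 - t \<le> (\<Sum>i\<in>A. c i)}"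
  have G_Pow: "G \<subseteq> Pow {1..<n}" and G_Pow': "G \<subseteq> Pow {0..<n}" by (auto simp: G_def)
  have "intersecting G"
    unfolding G_def using c stakes_after_first
    by (intro intersecting_heavy_subsets) (auto simp: stake_seq_def)
  have win: "{\<omega> \<in> space (bern_space p). 1/2 \<le> S_stake c \<omega>}
      \<subseteq> {\<omega>. \<omega> 0} \<union> {\<omega>. {i\<in>{0..<n}. \<omega> i} \<in> G}"
  proof (intro subsetI)
    fix \<omega> assume "\<omega> \<in> {\<omega> \<in> space (bern_space p). 1/2 \<le> S_stake c \<omega>}"
    then have "1/2 - t \<le> (\<Sum>i\<in>{i\<in>{0..<n}. \<omega> i}. c i)"
      using truncated[of \<omega>] by simp
    moreover have "{i\<in>{0..<n}. \<omega> i} \<subseteq> {1..<n}" if "\<not> \<omega> 0"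
      using that by (auto simp: Suc_le_eq intro: gr0I)
    ultimately show "\<omega> \<in> {\<omega>. \<omega> 0} \<union> {\<omega>. {i\<in>{0..<n}. \<omega> i} \<in> G}"
      by (cases "\<omega> 0") (auto simp: G_def)
  qed
  interpret prob_space "bern_space p" by (rule prob_space_bern_space)
  have "win_prob p c (1/2)
      \<le> measure (bern_space p) ({\<omega>. \<omega> 0} \<union> {\<omega>. {i\<in>{0..<n}. \<omega> i} \<in> G})"
    unfolding win_prob_def using win G_Pow' p
    by (intro finite_measure_mono sets.Un bern_space_cylinder_in_sets bern_space_coordinate) auto
  also have "\<dots> \<le> measure (bern_space p) {\<omega>. \<omega> 0}
      + measure (bern_space p) {\<omega>. {i\<in>{0..<n}. \<omega> i} \<in> G}"
    using G_Pow' p by (intro measure_Un_le bern_space_cylinder_in_sets bern_space_coordinate) auto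
  also have "\<dots> = p + biased_measure p {0..<n} G"
    using p G_Pow' measure_bern_space_cylinder[of p "{0..<n}" G] by (simp add: bern_space_coordinate)
  also have "biased_measure p {0..<n} G = (1 - p) * biased_measure p {1..<n} G"
  proof -
    have "{0..<n} = insert 0 {1..<n}" using n by auto
    then show ?thesis using G_Pow by (simp add: biased_measure_insert_unused)
  qed
  also have "\<dots> \<le> (1 - p) * p"
    using p G_Pow \<open>intersecting G\<close> by (intro mult_left_mono biased_measure_intersecting_le) auto
  finally show ?thesis by simp
qed

lemma pi_opt_eq_attained:
  assumes "stake_seq c" "\<And>c'. stake_seq c' \<Longrightarrow> win_prob p c' t \<le> win_prob p c t"
  shows "pi_opt p t = win_prob p c t"
  unfolding pi_opt_def using assms by (intro cSup_eq_maximum) auto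

lemma S_stake_finite_support:
  assumes "\<And>i. m \<le> i \<Longrightarrow> c i = 0"
  shows "S_stake c \<omega> = (\<Sum>i\<in>{i\<in>{0..<m}. \<omega> i}. c i)"
proof -
  have "S_stake c \<omega> = (\<Sum>i<m. c i * (if \<omega> i then 1 else 0))"
    unfolding S_stake_def using assms by (intro suminf_finite) auto
  then show ?thesis
    by (subst sum.inter_filter) (auto simp: lessThan_atLeast0 intro!: sum.cong)
qed

lemma bold_play_half: "bold_play (1/2) = (\<lambda>i. if i < 2 then 1/2 else 0)"
proof -
  have "nat \<lfloor>1 / (1/2 :: real)\<rfloor> = 2" by simp
  then show ?thesis
    unfolding bold_play_def Let_def by (simp only: of_nat_numeral)
qed

lemma stake_seq_bold_play_half: "stake_seq (\<lambda>i. if i < 2 then 1/2 else 0)"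
proof -
  have "(\<lambda>i::nat. if i < 2 then 1/2 else 0) sums (\<Sum>i\<in>{0..<2::nat}. if i < 2 then 1/2 else 0 :: real)"
    by (rule sums_finite) auto
  then show ?thesis by (auto simp: stake_seq_def)
qed

lemma win_prob_bold_play_half:
  assumes "0 \<le> p" "p \<le> 1"
  shows "win_prob p (\<lambda>i. if i < 2 then 1/2 else 0) (1/2) = p + (1 - p) * p"
proof -
  have "1/2 \<le> S_stake (\<lambda>i. if i < 2 then 1/2 else 0) \<omega>
      \<longleftrightarrow> {i\<in>{0..<2}. \<omega> i} \<in> {{0}, {1}, {0, 1}}" for \<omega>
  proof -
    have "S_stake (\<lambda>i. if i < 2 then 1/2 else 0) \<omega> = card {i\<in>{0..<2::nat}. \<omega> i} / 2"
      by (subst S_stake_finite_support[where m = 2]) (auto intro!: sum.cong)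
    then have "1/2 \<le> S_stake (\<lambda>i. if i < 2 then 1/2 else 0) \<omega> \<longleftrightarrow> {i\<in>{0..<2::nat}. \<omega> i} \<noteq> {}"
      by (simp add: Suc_le_eq card_gt_0_iff)
    also have "\<dots> \<longleftrightarrow> {i\<in>{0..<2}. \<omega> i} \<in> {{0}, {1}, {0, 1}}"
    proof -
      have "{0..<2} = {0, 1::nat}" by auto
      then show ?thesis by (cases "\<omega> 0"; cases "\<omega> 1") auto
    qed
    finally show ?thesis .
  qed
  moreover have "biased_measure p {0..<2::nat} {{0}, {1}, {0, 1}} = p + (1 - p) * p"
    by (simp add: biased_measure_def algebra_simps power2_eq_square)
  ultimately show ?thesis
    using assms measure_bern_space_cylinder[of p "{0..<2::nat}" "{{0}, {1}, {0, 1}}"]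
    unfolding win_prob_def by simp
qed

theorem corollary18:
  fixes p :: real
  assumes "0 \<le> p" and "p \<le> 1/2"
  shows "bold_play (1/2) = (\<lambda>i. if i < 2 then 1/2 else 0)
    \<and> stake_seq (bold_play (1/2))
    \<and> win_prob p (bold_play (1/2)) (1/2) = pi_opt p (1/2)
    \<and> pi_opt p (1/2) = p + (1 - p) * p"
proof -
  have win: "win_prob p (bold_play (1/2)) (1/2) = p + (1 - p) * p"
    using assms by (simp add: bold_play_half win_prob_bold_play_half)
  have "pi_opt p (1/2) = win_prob p (bold_play (1/2)) (1/2)"
    using win win_prob_half_le[OF _ assms]
    by (intro pi_opt_eq_attained) (simp_all add: bold_play_half stake_seq_bold_play_half)
  then show ?thesis
    using win by (simp add: bold_play_half stake_seq_bold_play_half)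
qed

end
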